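(* Let $M$ be a smooth Riemannian manifold embedded in $\mathbb{R}^p$, and let $\mathcal{D}\subset\mathbb{R}^d$ be a compact, connected, Lipschitz domain. Let $\mathcal{V}(\mathcal{D},\mathbb{R}^p)\subset C(\mathcal{D},\mathbb{R}^p)$ be a vector space of continuous functions, $\mathcal{V}_h(\mathcal{D},\mathbb{R}^p)\subset \mathcal{V}(\mathcal{D},\mathbb{R}^p)$ a finite-dimensional subspace, and $\mathcal{I}_h:\mathcal{V}(\mathcal{D},\mathbb{R}^p)\to\mathcal{V}_h(\mathcal{D},\mathbb{R}^p)$ a projection. Let $U\subset\mathbb{R}^p$ be a tubular neighborhood of $M$ on which the closest point projection $\mathcal{P}_M(v)=\operatorname{argmin}_{m\in M}\|m-v\|$ is well-defined and smooth. Let $\widetilde{\mathcal{V}}(\mathcal{D},M)=\{u\in\mathcal{V}(\mathcal{D},\mathbb{R}^p): u(x)\in M \text{ and } \mathcal{I}_hu(x)\in U \ \forall x\in\mathcal{D}\}$, and for $u\in\widetilde{\mathcal{V}}(\mathcal{D},M)$ define $(\mathcal{I}_{h,M}u)(x)=\mathcal{P}_M(\mathcal{I}_hu(x))$. Define $C_0(u)=\sup_{x\in\mathcal{D}}\|\nabla u(x)\|$, $C_1=\sup_{m\in M}\|\nabla\mathcal{P}_M(m)\|$, and $C_2=\sup_{u_1,u_2\in U,\,u_1\ne u_2}\frac{\|\nabla\mathcal{P}_M(u_1)-\nabla\mathcal{P}_M(u_2)\|}{\|u_1-u_2\|}$. Then for any $u\in\widetilde{\mathcal{V}}(\mathcal{D},M)\cap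 C^1(\mathcal{D},\mathbb{R}^p)$ and any $x\in\mathcal{D}$ (with $\mathcal{I}_hu$ differentiable at $x$), \[\|\nabla\mathcal{I}_{h,M}u(x)-\nabla u(x)\|\le C_1\|\nabla\mathcal{I}_hu(x)-\nabla u(x)\| + C_2\|\mathcal{I}_hu(x)-u(x)\|\big(\|\nabla\mathcal{I}_hu(x)-\nabla u(x)\|+C_0(u)\big).\]
   Context: $\|\cdot\|$ denotes the Euclidean norm on $\mathbb{R}^p$; for matrices, $\|\cdot\|$ denotes any consistent (submultiplicative, compatible) matrix norm. Here $\nabla u(x)\in\mathbb{R}^{p\times d}$ and $\nabla\mathcal{P}_M(v)\in\mathbb{R}^{p\times p}$ denote the gradients (Jacobian matrices) of $u$ and $\mathcal{P}_M$, viewed as $\mathbb{R}^p$-valued maps via the embedding $M\subset\mathbb{R}^p$. *)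

theory Defs
  imports "HOL-Analysis.Analysis"
begin

text \<open>Smooth (C-infinity) maps on an open set S: all iterated directional
derivatives exist (as Frechet derivatives) and are continuous on S.\<close>
definition smooth_on :: "'a::euclidean_space set \<Rightarrow> ('a \<Rightarrow> 'b::euclidean_space) \<Rightarrow> bool" where
  "smooth_on S f \<longleftrightarrow>
     (\<exists>F. f \<in> F \<and>
        (\<forall>g\<in>F. continuous_on S g \<and>
           (\<exists>Dg. (\<forall>x\<in>S. (g has_derivative Dg x) (at x)) \<and> (\<forall>v. (\<lambda>x. Dg x v) \<in> F))))"

text \<open>Smooth embedded submanifold of a Euclidean space (of some fixed dimension k),
via local straightening diffeomorphisms (submanifold charts). It carries the
Riemannian metric induced by the embedding.\<close>
definition smooth_embedded_submanifold :: "'a::euclidean_space set \<Rightarrow> bool" where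
  "smooth_embedded_submanifold M \<longleftrightarrow>
     (\<exists>k. \<forall>m\<in>M. \<exists>W (\<phi> :: 'a \<Rightarrow> 'a) (\<psi> :: 'a \<Rightarrow> 'a) L.
        open W \<and> m \<in> W \<and> open (\<phi> ` W) \<and>
        smooth_on W \<phi> \<and> smooth_on (\<phi> ` W) \<psi> \<and> (\<forall>y\<in>W. \<psi> (\<phi> y) = y) \<and>
        subspace L \<and> dim L = k \<and> \<phi> ` (M \<inter> W) = \<phi> ` W \<inter> L)"

text \<open>Lipschitz domain (bounded open set with boundary locally the graph of a
Lipschitz function), written coordinate-free: e is the local "vertical" unit direction
and the graph function g is evaluated on the hyperplane orthogonal to e.\<close>
definition lipschitz_domain :: "'a::euclidean_space set \<Rightarrow> bool" where
  "lipschitz_domain \<Omega> \<longleftrightarrow> open \<Omega> \<and> bounded \<Omega> \<and> \<Omega> \<noteq> {} \<and>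
     (\<forall>z\<in>frontier \<Omega>. \<exists>e r g L. norm e = 1 \<and> r > 0 \<and>
        (\<forall>a b. \<bar>g a - g b\<bar> \<le> L * norm (a - b)) \<and>
        \<Omega> \<inter> ball z r = {y \<in> ball z r. y \<bullet> e < (g :: 'a \<Rightarrow> real) (y - (y \<bullet> e) *\<^sub>R e)})"

definition compact_lipschitz_domain :: "'a::euclidean_space set \<Rightarrow> bool" where
  "compact_lipschitz_domain D \<longleftrightarrow> (\<exists>\<Omega>. lipschitz_domain \<Omega> \<and> D = closure \<Omega>)"

definition is_norm :: "('a::real_vector \<Rightarrow> real) \<Rightarrow> bool" where
  "is_norm N \<longleftrightarrow> (\<forall>A. N A \<ge> 0) \<and> (\<forall>A. N A = 0 \<longleftrightarrow> A = 0) \<and>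
     (\<forall>A B. N (A + B) \<le> N A + N B) \<and> (\<forall>c A. N (c *\<^sub>R A) = \<bar>c\<bar> * N A)"

definition consistent_matrix_norms ::
  "(real^'p^'p \<Rightarrow> real) \<Rightarrow> (real^'d^'p \<Rightarrow> real) \<Rightarrow> bool" where
  "consistent_matrix_norms Np Nd \<longleftrightarrow> is_norm Np \<and> is_norm Nd \<and>
     (\<forall>A B. Np (A ** B) \<le> Np A * Np B) \<and>
     (\<forall>A B. Nd (A ** B) \<le> Np A * Nd B) \<and>
     (\<forall>A v. norm (A *v v) \<le> Np A * norm v) \<and>
     (\<forall>B w. norm (B *v w) \<le> Nd B * norm w)"

text \<open>Abstract finite element setting: V a vector space of continuous functions on D
(functions are represented by extensions that vanish outside D), Vh a
finite-dimensional subspace, Ih a (linear) projection of V onto Vh.\<close>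
definition fun_subspace :: "'a set \<Rightarrow> ('a \<Rightarrow> 'b::real_vector) set \<Rightarrow> bool" where
  "fun_subspace D V \<longleftrightarrow> (\<lambda>x. 0) \<in> V \<and>
     (\<forall>f\<in>V. \<forall>g\<in>V. (\<lambda>x. f x + g x) \<in> V) \<and>
     (\<forall>c. \<forall>f\<in>V. (\<lambda>x. c *\<^sub>R f x) \<in> V) \<and>
     (\<forall>f\<in>V. \<forall>x. x \<notin> D \<longrightarrow> f x = 0)"

definition fe_setting ::
  "'a::topological_space set \<Rightarrow> ('a \<Rightarrow> 'b::real_normed_vector) set \<Rightarrow> ('a \<Rightarrow> 'b) set
     \<Rightarrow> (('a \<Rightarrow> 'b) \<Rightarrow> ('a \<Rightarrow> 'b)) \<Rightarrow> bool" where
  "fe_setting D V Vh Ih \<longleftrightarrow>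
     fun_subspace D V \<and> (\<forall>f\<in>V. continuous_on D f) \<and>
     fun_subspace D Vh \<and> Vh \<subseteq> V \<and>
     (\<exists>B. finite B \<and> B \<subseteq> Vh \<and>
        (\<forall>f\<in>Vh. \<exists>c. \<forall>x. f x = (\<Sum>b\<in>B. c b *\<^sub>R b x))) \<and>
     (\<forall>f\<in>V. Ih f \<in> Vh) \<and>
     (\<forall>f\<in>V. \<forall>g\<in>V. Ih (\<lambda>x. f x + g x) = (\<lambda>x. Ih f x + Ih g x)) \<and>
     (\<forall>c. \<forall>f\<in>V. Ih (\<lambda>x. c *\<^sub>R f x) = (\<lambda>x. c *\<^sub>R Ih f x)) \<and>
     (\<forall>f\<in>Vh. Ih f = f)"

end

theory Submission
  imports Defs
begin

text \<open>By the chain rule, the derivative of \<open>\<P>\<^sub>M \<circ> \<I>\<^sub>h u\<close> at \<open>x\<close> is \<open>\<nabla>\<P>\<^sub>M(v) \<nabla>\<I>\<^sub>h u(x)\<close> with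
  \<open>v = \<I>\<^sub>h u(x)\<close>, while differentiating \<open>\<P>\<^sub>M \<circ> u = u\<close> gives \<open>\<nabla>u(x) = \<nabla>\<P>\<^sub>M(m) \<nabla>u(x)\<close> with
  \<open>m = u(x)\<close>. Writing \<open>A = \<nabla>\<I>\<^sub>h u(x) - \<nabla>u(x)\<close>, the error splits as
  \<open>\<nabla>\<P>\<^sub>M(m) A + (\<nabla>\<P>\<^sub>M(v) - \<nabla>\<P>\<^sub>M(m)) (A + \<nabla>u(x))\<close>, and consistency of the matrix norms
  bounds the two terms by \<open>C\<^sub>1\<close> and \<open>C\<^sub>2 \<parallel>v - m\<parallel>\<close>. Derivatives are taken within \<open>\<D>\<close>, so they are
  only meaningful because a Lipschitz domain contains a small open cone at each of its points,
  which makes derivatives within \<open>\<D>\<close> unique.\<close>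

definition interior_cone_at :: "'a::real_normed_vector set \<Rightarrow> 'a \<Rightarrow> bool" where
  "interior_cone_at S x \<longleftrightarrow>
     (\<exists>w0 \<rho> \<delta>. 0 < \<rho> \<and> 0 < \<delta> \<and> (\<forall>w\<in>ball w0 \<rho>. \<forall>t. 0 < t \<longrightarrow> t < \<delta> \<longrightarrow> x + t *\<^sub>R w \<in> S))"

lemma interior_cone_at_mono: "interior_cone_at S x \<Longrightarrow> S \<subseteq> T \<Longrightarrow> interior_cone_at T x"
  unfolding interior_cone_at_def by blast

lemma interior_cone_at_interior:
  assumes "x \<in> interior S"
  shows "interior_cone_at S x"
proof -
  obtain r where r: "0 < r" "ball x r \<subseteq> S"
    using assms by (meson mem_interior)
  have "x + t *\<^sub>R w \<in> S" if "w \<in> ball 0 1" "0 < t" "t < r" for w t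
  proof -
    have "norm (t *\<^sub>R w) = t * norm w" "t * norm w < t"
      using that mult_strict_left_mono[of "norm w" 1 t] by simp_all
    then have "norm (t *\<^sub>R w) < r"
      using that by linarith
    then show ?thesis
      using r(2) by (auto simp: dist_norm)
  qed
  then show ?thesis
    unfolding interior_cone_at_def using r(1) by (metis zero_less_one)
qed

lemma interior_cone_at_lipschitz_subgraph:
  fixes g :: "'a::euclidean_space \<Rightarrow> real"
  assumes e: "norm e = 1" and r: "0 < r" and g: "L-lipschitz_on UNIV g"
    and local_graph: "\<Omega> \<inter> ball z r = {y \<in> ball z r. y \<bullet> e < g (y - (y \<bullet> e) *\<^sub>R e)}"
    and z: "z \<in> closure \<Omega>"
  shows "interior_cone_at \<Omega> z"
proof -
  define P where "P y = y - (y \<bullet> e) *\<^sub>R e" for y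
  have ee: "e \<bullet> e = 1"
    using e by (simp add: dot_square_norm)
  have P_diff: "P a - P b = P (a - b)" and P_scale: "P (t *\<^sub>R a) = t *\<^sub>R P a"
    and P_e: "P e = 0" for a b t
    by (simp_all add: P_def algebra_simps inner_diff_left ee)
  have P_norm: "norm (P a) \<le> 2 * norm a" for a
    using norm_triangle_ineq4[of a "(a \<bullet> e) *\<^sub>R e"] Cauchy_Schwarz_ineq2[of a e] e
    by (simp add: P_def)
  have L: "0 \<le> L"
    using g by (rule lipschitz_on_nonneg)
  have g_lower: "g (P b) - L * norm (P (a - b)) \<le> g (P a)" for a b
    using lipschitz_onD[OF g, of "P a" "P b"] by (simp add: dist_norm P_diff abs_le_iff)
  have z_below: "z \<bullet> e \<le> g (P z)"
  proof -
    have "continuous_on UNIV (\<lambda>y. g (P y))"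
      unfolding P_def
      by (intro continuous_intros continuous_on_compose2[OF lipschitz_on_continuous_on[OF g]]) auto
    then have "closed {y. y \<bullet> e \<le> g (P y)}"
      by (intro closed_Collect_le continuous_intros)
    moreover have "\<Omega> \<inter> ball z r \<subseteq> {y. y \<bullet> e \<le> g (P y)}"
      using local_graph by (auto simp: P_def)
    ultimately have "closure (ball z r \<inter> \<Omega>) \<subseteq> {y. y \<bullet> e \<le> g (P y)}"
      by (simp add: closure_minimal Int_commute)
    moreover have "z \<in> closure (ball z r \<inter> \<Omega>)"
      using open_Int_closure_subset[of "ball z r" \<Omega>] z r by auto
    ultimately show ?thesis
      by blast
  qed
  \<comment> \<open>Along \<open>w \<approx> -e\<close> the height drops at rate about \<open>1\<close>, the graph by at most \<open>2 L \<rho>\<close>.\<close>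
  define \<rho> where "\<rho> = 1 / (2 + 4 * L)"
  have \<rho>: "0 < \<rho>" "\<rho> \<le> 1/2" "\<rho> * (1 + 2 * L) = 1/2"
    using L by (auto simp: \<rho>_def field_simps)
  have "z + t *\<^sub>R w \<in> \<Omega>" if w: "w \<in> ball (- e) \<rho>" and t: "0 < t" "t < r / 2" for w t
  proof -
    define d where "d = w + e"
    have d: "norm d < \<rho>"
      using w by (simp add: d_def dist_norm norm_minus_commute add.commute)
    then have "norm w < 2"
      using \<rho>(2) e norm_triangle_ineq4[of d e] by (simp add: d_def)
    then have "norm (t *\<^sub>R w) = t * norm w" "t * norm w < t * 2"
      using t mult_strict_left_mono[of "norm w" 2 t] by simp_all
    then have "norm (t *\<^sub>R w) < r"
      using t by linarith
    then have in_ball: "z + t *\<^sub>R w \<in> ball z r"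
      by (simp add: dist_norm)
    have "(z + t *\<^sub>R w) \<bullet> e = z \<bullet> e + t * (d \<bullet> e - 1)"
      by (simp add: d_def inner_add_left ee algebra_simps)
    also have "\<dots> \<le> z \<bullet> e + t * (\<rho> - 1)"
      using t d Cauchy_Schwarz_ineq2[of d e] e by (intro add_left_mono mult_left_mono) auto
    also have "\<dots> < g (P z) - L * (t * (2 * \<rho>))"
    proof -
      have "t * (\<rho> - 1) + L * (t * (2 * \<rho>)) = t * (\<rho> * (1 + 2 * L)) - t"
        by (simp add: algebra_simps)
      also have "\<dots> = - t / 2"
        by (simp add: \<rho>(3))
      finally show ?thesis
        using z_below t \<rho>(3) by linarith
    qed
    also have "\<dots> \<le> g (P z) - L * norm (P (t *\<^sub>R w))"
    proof -
      have "P w = P d"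
        using P_diff[of d e] P_e by (simp add: d_def)
      then have "norm (P (t *\<^sub>R w)) \<le> t * (2 * \<rho>)"
        using t P_norm[of d] d by (simp add: P_scale mult_left_mono)
      then show ?thesis
        using L by (simp add: mult_left_mono)
    qed
    also have "\<dots> \<le> g (P (z + t *\<^sub>R w))"
      using g_lower[where a = "z + t *\<^sub>R w" and b = z] by simp
    finally show ?thesis
      using local_graph in_ball by (auto simp: P_def)
  qed
  then show ?thesis
    unfolding interior_cone_at_def using \<rho>(1) r by (metis half_gt_zero)
qed

lemma interior_cone_at_compact_lipschitz_domain:
  fixes D :: "'a::euclidean_space set"
  assumes "compact_lipschitz_domain D" and "x \<in> D"
  shows "interior_cone_at D x"
proof -
  obtain \<Omega> where \<Omega>: "lipschitz_domain \<Omega>" and D: "D = closure \<Omega>"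
    using assms(1) unfolding compact_lipschitz_domain_def by blast
  have "interior_cone_at \<Omega> x"
  proof (cases "x \<in> \<Omega>")
    case True
    then show ?thesis
      using \<Omega> by (simp add: interior_cone_at_interior lipschitz_domain_def interior_open)
  next
    case False
    then have "x \<in> frontier \<Omega>"
      using assms(2) D \<Omega> by (simp add: frontier_def lipschitz_domain_def interior_open)
    then obtain e r g L where e: "norm e = 1" and r: "0 < r"
      and g: "\<forall>a b. \<bar>g a - g b\<bar> \<le> L * norm (a - b)"
      and graph: "\<Omega> \<inter> ball x r = {y \<in> ball x r. y \<bullet> e < (g :: 'a \<Rightarrow> real) (y - (y \<bullet> e) *\<^sub>R e)}"
      using \<Omega> unfolding lipschitz_domain_def by blast
    have "0 \<le> L"
      using g[rule_format, of e 0] e by simp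
    then have "L-lipschitz_on UNIV g"
      using g by (intro lipschitz_onI) (auto simp: dist_norm dist_real_def)
    then show ?thesis
      using interior_cone_at_lipschitz_subgraph[OF e r _ graph] assms(2) D by blast
  qed
  then show ?thesis
    using D closure_subset interior_cone_at_mono by blast
qed

lemma has_derivative_within_unique_on_direction:
  fixes f :: "'a::real_normed_vector \<Rightarrow> 'b::real_normed_vector"
  assumes f': "(f has_derivative f') (at x within S)"
    and f'': "(f has_derivative f'') (at x within S)"
    and w: "\<And>\<epsilon>. 0 < \<epsilon> \<Longrightarrow> \<exists>t. 0 < t \<and> t < \<epsilon> \<and> x + t *\<^sub>R w \<in> S"
  shows "f' w = f'' w"
proof -
  define T where "T = {t::real. x + t *\<^sub>R w \<in> S}"
  have line: "((\<lambda>t. x + t *\<^sub>R w) has_derivative (\<lambda>t. t *\<^sub>R w)) (at 0 within T)"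
    by (auto intro!: derivative_eq_intros)
  have line_in: "(\<lambda>t. x + t *\<^sub>R w) ` T \<subseteq> S"
    by (auto simp: T_def)
  have on_line: "((\<lambda>t. f (x + t *\<^sub>R w)) has_derivative (\<lambda>t. F (t *\<^sub>R w))) (at 0 within T)"
    if "(f has_derivative F) (at x within S)" for F
    by (rule has_derivative_in_compose[OF line]) (use has_derivative_subset[OF that line_in] in simp)
  have "(\<lambda>t. f' (t *\<^sub>R w)) = (\<lambda>t. f'' (t *\<^sub>R w))"
  proof (rule frechet_derivative_unique_within[OF on_line[OF f'] on_line[OF f'']])
    fix i :: real and \<epsilon> :: real
    assume "i \<in> Basis" "0 < \<epsilon>"
    then obtain t where "0 < t" "t < \<epsilon>" "x + t *\<^sub>R w \<in> S" and "i = 1"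
      using w by auto
    then show "\<exists>d. 0 < \<bar>d\<bar> \<and> \<bar>d\<bar> < \<epsilon> \<and> 0 + d *\<^sub>R i \<in> T"
      by (intro exI[of _ t]) (simp add: T_def)
  qed
  then show ?thesis
    by (metis scaleR_one)
qed

lemma linear_eq_on_ball:
  fixes f g :: "'a::euclidean_space \<Rightarrow> 'b::real_normed_vector"
  assumes "linear f" "linear g" "0 < \<rho>" "\<And>w. w \<in> ball w0 \<rho> \<Longrightarrow> f w = g w"
  shows "f = g"
proof -
  have "dim (ball w0 \<rho>) = dim (UNIV :: 'a set)"
    using assms(3) by (intro dim_openin) auto
  then have "span (ball w0 \<rho>) = UNIV"
    by (simp add: dim_eq_full)
  then show ?thesis
    using linear_eq_on_span[OF assms(1,2), of "ball w0 \<rho>"] assms(4) by auto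
qed

lemma has_derivative_within_interior_cone_unique:
  fixes f :: "'a::euclidean_space \<Rightarrow> 'b::real_normed_vector"
  assumes cone: "interior_cone_at S x"
    and f': "(f has_derivative f') (at x within S)"
    and f'': "(f has_derivative f'') (at x within S)"
  shows "f' = f''"
proof -
  obtain w0 \<rho> \<delta> where \<rho>: "0 < \<rho>" and \<delta>: "0 < \<delta>"
    and in_S: "\<And>w t. w \<in> ball w0 \<rho> \<Longrightarrow> 0 < t \<Longrightarrow> t < \<delta> \<Longrightarrow> x + t *\<^sub>R w \<in> S"
    using cone unfolding interior_cone_at_def by blast
  have "f' w = f'' w" if "w \<in> ball w0 \<rho>" for w
  proof (rule has_derivative_within_unique_on_direction[OF f' f''])
    fix \<epsilon> :: real assume "0 < \<epsilon>"
    then show "\<exists>t. 0 < t \<and> t < \<epsilon> \<and> x + t *\<^sub>R w \<in> S"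
      using in_S[OF that, of "min \<epsilon> \<delta> / 2"] \<delta> by (intro exI[of _ "min \<epsilon> \<delta> / 2"]) auto
  qed
  then show ?thesis
    using linear_eq_on_ball[OF has_derivative_linear[OF f'] has_derivative_linear[OF f''] \<rho>] by blast
qed

lemma matrix_derivative_within_interior_cone_unique:
  fixes A B :: "real^'n^'m"
  assumes "interior_cone_at S x"
    and "(f has_derivative (\<lambda>h. A *v h)) (at x within S)"
    and "(f has_derivative (\<lambda>h. B *v h)) (at x within S)"
  shows "A = B"
  using has_derivative_within_interior_cone_unique[OF assms] by (metis matrix_eq)

lemma has_derivative_matrix_compose:
  assumes "(f has_derivative (\<lambda>h. A *v h)) (at x within S)"
    and "(g has_derivative (\<lambda>h. B *v h)) (at (f x))"
  shows "((\<lambda>y. g (f y)) has_derivative (\<lambda>h. (B ** A) *v h)) (at x within S)"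
  using has_derivative_in_compose[OF assms(1) has_derivative_at_withinI[OF assms(2)]]
  by (simp add: matrix_vector_mul_assoc)

lemma is_norm_sum:
  assumes "is_norm N" and "finite I"
  shows "N (\<Sum>i\<in>I. f i) \<le> (\<Sum>i\<in>I. N (f i))"
  using assms(2)
proof (induction I rule: finite_induct)
  case empty
  have "N 0 = 0"
    using assms(1) by (simp add: is_norm_def)
  then show ?case
    by simp
next
  case (insert i I)
  have "N (f i + sum f I) \<le> N (f i) + N (sum f I)"
    using assms(1) by (simp add: is_norm_def)
  then show ?case
    using insert by simp
qed

lemma is_norm_le_norm:
  fixes v :: "'a::euclidean_space"
  assumes N: "is_norm N"
  shows "N v \<le> (\<Sum>b\<in>Basis. N b) * norm v"
proof -
  have "N v = N (\<Sum>b\<in>Basis. (v \<bullet> b) *\<^sub>R b)"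
    by (simp add: euclidean_representation)
  also have "\<dots> \<le> (\<Sum>b\<in>Basis. N ((v \<bullet> b) *\<^sub>R b))"
    by (rule is_norm_sum[OF N]) simp
  also have "\<dots> = (\<Sum>b\<in>Basis. \<bar>v \<bullet> b\<bar> * N b)"
    using N by (simp add: is_norm_def)
  also have "\<dots> \<le> (\<Sum>b\<in>Basis. norm v * N b)"
    using N Basis_le_norm by (intro sum_mono mult_right_mono) (auto simp: is_norm_def)
  finally show ?thesis
    by (simp add: sum_distrib_left mult.commute)
qed

lemma is_norm_bdd_above_compact_image:
  fixes F :: "'a::topological_space \<Rightarrow> 'b::euclidean_space"
  assumes "is_norm N" and "compact D" and "continuous_on D F"
  shows "bdd_above ((\<lambda>y. N (F y)) ` D)"
proof -
  obtain B where B: "\<And>y. y \<in> D \<Longrightarrow> norm (F y) \<le> B"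
    using compact_imp_bounded[OF compact_continuous_image[OF assms(3,2)]]
    by (auto simp: bounded_iff)
  have "N (F y) \<le> (\<Sum>b\<in>Basis. N b) * B" if "y \<in> D" for y
    using is_norm_le_norm[OF assms(1), of "F y"] B[OF that] assms(1)
    by (smt (verit, best) is_norm_def mult_left_mono sum_nonneg)
  then show ?thesis
    by (intro bdd_aboveI2)
qed

lemma le_SUP_difference_quotient:
  fixes F :: "'a::real_normed_vector \<Rightarrow> 'b::real_vector"
  assumes bdd: "bdd_above ((\<lambda>(a, b). N (F a - F b) / norm (a - b)) `
                              {(a, b). a \<in> U \<and> b \<in> U \<and> a \<noteq> b})"
    and "a \<in> U" "b \<in> U" and "N 0 = 0"
  shows "N (F a - F b) \<le> (SUP (a, b)\<in>{(a, b). a \<in> U \<and> b \<in> U \<and> a \<noteq> b}.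
                                  N (F a - F b) / norm (a - b)) * norm (a - b)"
proof (cases "a = b")
  case False
  have "N (F a - F b) / norm (a - b) \<le> (SUP (a, b)\<in>{(a, b). a \<in> U \<and> b \<in> U \<and> a \<noteq> b}.
                                            N (F a - F b) / norm (a - b))"
    by (rule cSUP_upper2[OF bdd, of "(a, b)"]) (use assms False in auto)
  then show ?thesis
    using False by (simp add: pos_divide_le_eq)
qed (use assms in simp)

lemma consistent_matrix_norms_projection_error:
  assumes norms: "consistent_matrix_norms Np Nd" and fixed: "P0 ** B = B"
  shows "Nd (P1 ** A - B) \<le> Np P0 * Nd (A - B) + Np (P1 - P0) * (Nd (A - B) + Nd B)"
proof -
  have Np: "is_norm Np" and Nd: "is_norm Nd" and Nd_mult: "\<And>P C. Nd (P ** C) \<le> Np P * Nd C"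
    using norms unfolding consistent_matrix_norms_def by blast+
  have "P1 ** A - B = P0 ** (A - B) + (P1 - P0) ** ((A - B) + B)"
  proof -
    have "(P1 ** A - B) *v h = (P0 ** (A - B) + (P1 - P0) ** ((A - B) + B)) *v h" for h
      using arg_cong[OF fixed, of "\<lambda>C. C *v h"]
      by (simp add: matrix_vector_mul_assoc[symmetric] algebra_simps)
    then show ?thesis
      by (simp add: matrix_eq)
  qed
  then have "Nd (P1 ** A - B) \<le> Nd (P0 ** (A - B)) + Nd ((P1 - P0) ** ((A - B) + B))"
    using Nd unfolding is_norm_def by metis
  also have "\<dots> \<le> Np P0 * Nd (A - B) + Np (P1 - P0) * (Nd (A - B) + Nd B)"
    using Nd_mult[of P0 "A - B"] Nd_mult[of "P1 - P0" "(A - B) + B"] Np Nd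
    unfolding is_norm_def by (smt (verit) mult_left_mono)
  finally show ?thesis .
qed

theorem proposition2p3:
  fixes M U :: "(real^'p) set"
    and D :: "(real^'d) set"
    and V Vh :: "(real^'d \<Rightarrow> real^'p) set"
    and Ih :: "(real^'d \<Rightarrow> real^'p) \<Rightarrow> (real^'d \<Rightarrow> real^'p)"
    and DP :: "real^'p \<Rightarrow> real^'p^'p"
    and Np :: "real^'p^'p \<Rightarrow> real"
    and Nd :: "real^'d^'p \<Rightarrow> real"
    and u :: "real^'d \<Rightarrow> real^'p"
    and Du :: "real^'d \<Rightarrow> real^'d^'p"
    and x :: "real^'d"
    and DI :: "real^'d^'p"
    and G :: "real^'d^'p"
  assumes norms: "consistent_matrix_norms Np Nd"
    and manifold: "smooth_embedded_submanifold M"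
    and domain: "compact D" "connected D" "compact_lipschitz_domain D"
    and fe: "fe_setting D V Vh Ih"
    and U_open: "open U" and M_sub_U: "M \<subseteq> U"
    and P_welldef: "\<forall>v\<in>U. \<exists>!m. m \<in> M \<and> (\<forall>m'\<in>M. dist v m \<le> dist v m')"
    and P_smooth: "smooth_on U (closest_point M)"
    and DP_grad: "\<forall>v\<in>U. (closest_point M has_derivative (\<lambda>h. DP v *v h)) (at v)"
    and C1_fin: "bdd_above ((\<lambda>m. Np (DP m)) ` M)"
    and C2_fin: "bdd_above ((\<lambda>(v1, v2). Np (DP v1 - DP v2) / norm (v1 - v2)) `
                              {(v1, v2). v1 \<in> U \<and> v2 \<in> U \<and> v1 \<noteq> v2})"
    and u_V: "u \<in> V"
    and u_M: "\<forall>y\<in>D. u y \<in> M"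
    and Ihu_U: "\<forall>y\<in>D. Ih u y \<in> U"
    and u_C1: "\<forall>y\<in>D. (u has_derivative (\<lambda>h. Du y *v h)) (at y within D)"
    and Du_cont: "continuous_on D Du"
    and x_D: "x \<in> D"
    and DI_grad: "(Ih u has_derivative (\<lambda>h. DI *v h)) (at x within D)"
    and G_grad: "((\<lambda>y. closest_point M (Ih u y)) has_derivative (\<lambda>h. G *v h)) (at x within D)"
  shows "Nd (G - Du x)
           \<le> (SUP m\<in>M. Np (DP m)) * Nd (DI - Du x)
             + (SUP (v1, v2)\<in>{(v1, v2). v1 \<in> U \<and> v2 \<in> U \<and> v1 \<noteq> v2}.
                   Np (DP v1 - DP v2) / norm (v1 - v2))
               * norm (Ih u x - u x) * (Nd (DI - Du x) + (SUP y\<in>D. Nd (Du y)))"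
proof -
  have cone: "interior_cone_at D x"
    using interior_cone_at_compact_lipschitz_domain[OF domain(3) x_D] .
  have Np: "is_norm Np" and Nd: "is_norm Nd"
    using norms unfolding consistent_matrix_norms_def by blast+
  have mU: "u x \<in> U" and vU: "Ih u x \<in> U"
    using u_M Ihu_U x_D M_sub_U by auto
  have G: "G = DP (Ih u x) ** DI"
    using has_derivative_matrix_compose[OF DI_grad] DP_grad vU
    by (auto intro: matrix_derivative_within_interior_cone_unique[OF cone G_grad])
  have Du_x: "(u has_derivative (\<lambda>h. Du x *v h)) (at x within D)"
    using u_C1 x_D by blast
  have "((\<lambda>y. closest_point M (u y)) has_derivative (\<lambda>h. (DP (u x) ** Du x) *v h)) (at x within D)"
    using has_derivative_matrix_compose[OF Du_x] DP_grad mU by blast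
  then have "(u has_derivative (\<lambda>h. (DP (u x) ** Du x) *v h)) (at x within D)"
    by (rule has_derivative_transform_within[of _ _ _ _ 1]) (use x_D u_M closest_point_self in auto)
  then have fixed: "DP (u x) ** Du x = Du x"
    by (rule matrix_derivative_within_interior_cone_unique[OF cone _ Du_x])
  have C1: "Np (DP (u x)) \<le> (SUP m\<in>M. Np (DP m))"
    using u_M x_D by (intro cSUP_upper[OF _ C1_fin]) auto
  have C2: "Np (DP (Ih u x) - DP (u x)) \<le> (SUP (v1, v2)\<in>{(v1, v2). v1 \<in> U \<and> v2 \<in> U \<and> v1 \<noteq> v2}.
              Np (DP v1 - DP v2) / norm (v1 - v2)) * norm (Ih u x - u x)"
    using le_SUP_difference_quotient[OF C2_fin vU mU] Np by (simp add: is_norm_def)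
  have C0: "Nd (Du x) \<le> (SUP y\<in>D. Nd (Du y))"
    using is_norm_bdd_above_compact_image[OF Nd domain(1) Du_cont] x_D by (rule cSUP_upper2) simp
  have nonneg: "0 \<le> Nd (DI - Du x)" "0 \<le> Nd (Du x)" "0 \<le> Np (DP (Ih u x) - DP (u x))"
    using Np Nd by (simp_all add: is_norm_def)
  show ?thesis
    using consistent_matrix_norms_projection_error[OF norms fixed, of "DP (Ih u x)" DI]
      C1 C2 C0 nonneg unfolding G
    by (smt (verit) mult_mono mult_right_mono)
qed

end
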